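(* For every $k\in\mathbb{N}$ there is a constant $C_k>0$ (depending only on $k$ and $b$) such that for every integer $r\ge1$ and every $1\le i\le\lambda(r)$, \[\mathbb{E}\big(|X_i^{(r)}|^k\big)\le C_k.\]
   Context: Fix an integer $b\ge2$. $\mathbb{X}:=\{0,\dots,b-1\}^{\mathbb{N}}$ is the space of $b$-adic integers ($x_0$ the units digit) with addition with carries extending addition on $\mathbb{N}$ ($\mathbb{N}$ embedded via base-$b$ digits); $T(x):=x+1$; $\mathbb{P}$ is the normalized Haar measure (digits i.i.d. uniform), and $\mathbb{E}$ denotes expectation under $\mathbb{P}$. For $k\in\mathbb{N}$, $s_k(x):=x_0+\dots+x_k$, $\Delta_k^{(t)}(x):=s_k(x+t)-s_k(x)$, and $\Delta^{(t)}(x):=\lim_k\Delta_k^{(t)}(x)$, defined for all but finitely many $x$. Blocks: write the expansion of $r\ge1$ as the digit string $r_\ell\cdots r_0$, $r_\ell\ne0$; a block is a maximal run of consecutive $0$ digits, a maximal run of consecutive digits equal to $b-1$, or (when $b\ge3$) a single digit with value in $\{1,\dots,b-2\}$; non-zero blocks are those that are not runs of $0$'s, and $\lambda(r)$ is their number. Let $B_1,\dots,B_{\lambda(r)}$ be the non-zero blocks listed from the most significant end to the units digit. For $0\le i\le\lambda(r)$, $r[i]$ is the integer whose expansion is obtained from that of $r$ by replacing each block $B_k$ with $k>i$ by a run of $0$'s of the same length (so $r[0]=0$, $r[\lambda(r)]=r$). Define, $\mathbb{P}$-a.e., $X_i^{(r)}:=\Delta^{(r[i]-r[i-1])}\circ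 T^{r[i-1]}$ for $1\le i\le\lambda(r)$. *)

theory Defs
  imports "HOL-Probability.Probability"
begin

text \<open>b-adic integers: digit sequences x :: nat \<Rightarrow> nat with x j < b (x 0 = units digit).\<close>

text \<open>Normalized Haar measure: digits i.i.d. uniform on {0..b-1}.\<close>
definition haar :: "nat \<Rightarrow> (nat \<Rightarrow> nat) measure" where
  "haar b = PiM UNIV (\<lambda>_::nat. measure_pmf (pmf_of_set {..<b}))"

text \<open>Addition with carries of a natural number t to a b-adic integer x:
  digit k of x + t is digit k of (x_0 + ... + x_k b^k) + t.\<close>
definition badd :: "nat \<Rightarrow> (nat \<Rightarrow> nat) \<Rightarrow> nat \<Rightarrow> (nat \<Rightarrow> nat)" where
  "badd b x t = (\<lambda>k. ((\<Sum>j\<le>k. x j * b ^ j) + t) div b ^ k mod b)"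

definition Todo :: "nat \<Rightarrow> (nat \<Rightarrow> nat) \<Rightarrow> (nat \<Rightarrow> nat)" where
  "Todo b x = badd b x 1"

definition sk :: "nat \<Rightarrow> (nat \<Rightarrow> nat) \<Rightarrow> int" where
  "sk k x = (\<Sum>j\<le>k. int (x j))"

definition DeltaK :: "nat \<Rightarrow> nat \<Rightarrow> nat \<Rightarrow> (nat \<Rightarrow> nat) \<Rightarrow> int" where
  "DeltaK b t k x = sk k (badd b x t) - sk k x"

text \<open>Limit of DeltaK as k \<rightarrow> \<infinity>; set to 0 on the (null) set where the limit does not exist.\<close>
definition Delta :: "nat \<Rightarrow> nat \<Rightarrow> (nat \<Rightarrow> nat) \<Rightarrow> real" where
  "Delta b t x = (if convergent (\<lambda>k. real_of_int (DeltaK b t k x))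
                  then lim (\<lambda>k. real_of_int (DeltaK b t k x)) else 0)"

definition dig :: "nat \<Rightarrow> nat \<Rightarrow> nat \<Rightarrow> nat" where
  "dig b r j = r div b ^ j mod b"

text \<open>Number of digits (\<ell>+1 for r \<ge> 1).\<close>
definition ndigits :: "nat \<Rightarrow> nat \<Rightarrow> nat" where
  "ndigits b r = (LEAST n. r < b ^ n)"

text \<open>Positions j \<le> j' lie in the same block: all digits in between are equal, and either
  j = j' or the common digit is 0 or b-1 (digits in {1..b-2} form singleton blocks).\<close>
definition same_block :: "nat \<Rightarrow> nat \<Rightarrow> nat \<Rightarrow> nat \<Rightarrow> bool" where
  "same_block b r j j' \<longleftrightarrow> j \<le> j' \<and> (\<forall>m\<in>{j..j'}. dig b r m = dig b r j) \<and>
     (j = j' \<or> dig b r j = 0 \<or> dig b r j = b - 1)"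

definition nz_block_lows :: "nat \<Rightarrow> nat \<Rightarrow> nat set" where
  "nz_block_lows b r = {j. j < ndigits b r \<and> dig b r j \<noteq> 0 \<and>
                          (j = 0 \<or> \<not> same_block b r (j - 1) j)}"

definition lam :: "nat \<Rightarrow> nat \<Rightarrow> nat" where
  "lam b r = card (nz_block_lows b r)"

text \<open>Lowest position of block B_k (k = 1..lam), blocks listed from the most significant end.\<close>
definition block_low :: "nat \<Rightarrow> nat \<Rightarrow> nat \<Rightarrow> nat" where
  "block_low b r k = rev (sorted_list_of_set (nz_block_lows b r)) ! (k - 1)"

text \<open>r[i]: replace every block B_k with k > i by zeros.\<close>
definition rtrunc :: "nat \<Rightarrow> nat \<Rightarrow> nat \<Rightarrow> nat" where
  "rtrunc b r i = (\<Sum>j<ndigits b r.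
      (if \<exists>k. i < k \<and> k \<le> lam b r \<and> same_block b r (block_low b r k) j then 0 else dig b r j)
      * b ^ j)"

definition Xr :: "nat \<Rightarrow> nat \<Rightarrow> nat \<Rightarrow> (nat \<Rightarrow> nat) \<Rightarrow> real" where
  "Xr b r i x = Delta b (rtrunc b r i - rtrunc b r (i - 1)) ((Todo b ^^ rtrunc b r (i - 1)) x)"

end

theory Submission
  imports Defs
begin

(* Put s = r[i-1] and t = r[i] - r[i-1]. Then X_i = Delta^(t)(x + s), where b^M divides s and t is
   the value of the single block B_i, which occupies the digit positions m, ..., M-1; so either
   M = m + 1, or B_i is a run of digits b-1 and t = b^M - b^m. Adding t to y = x + s changes no digit
   of y outside the positions m, ..., m+Z and M, ..., M+R, where Z is the length of the run of zeros
   of y (equivalently of x) starting at position m, and R is the length of the run of digits b-1 of y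
   starting at position M: the carry, or the borrow, created inside the block stops at the first
   nonzero digit, and the carry leaving the block is absorbed by the first digit different from b-1.
   Hence |X_i| <= (b-1)(Z+R+2). The events Z >= n and R >= n each prescribe n digits of x, so they
   have Haar measure at most b^-n, and E |X_i|^k is bounded by a multiple of the convergent series
   sum_n (n+1)^k b^-n, uniformly in r and i. *)

section \<open>Digits of b-adic sums\<close>

definition prefix_value :: "nat \<Rightarrow> (nat \<Rightarrow> nat) \<Rightarrow> nat \<Rightarrow> nat" where
  "prefix_value b x n = (\<Sum>j<n. x j * b ^ j)"

lemma prefix_value_0 [simp]: "prefix_value b x 0 = 0"
  by (simp add: prefix_value_def)

lemma prefix_value_Suc: "prefix_value b x (Suc n) = prefix_value b x n + x n * b ^ n"
  by (simp add: prefix_value_def)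

lemma prefix_value_add:
  "prefix_value b x (M + n) = prefix_value b x M + b ^ M * prefix_value b (\<lambda>j. x (M + j)) n"
proof (induction n)
  case (Suc n)
  have "prefix_value b x (M + Suc n) = prefix_value b x (M + n) + x (M + n) * b ^ (M + n)"
    by (simp add: prefix_value_Suc)
  also have "\<dots> = prefix_value b x M + b ^ M * prefix_value b (\<lambda>j. x (M + j)) (Suc n)"
    by (simp add: Suc prefix_value_Suc power_add algebra_simps)
  finally show ?case .
qed simp

lemma div_mod_add_multiple:
  fixes b :: nat
  assumes "b ^ Suc j dvd q"
  shows "(a + q) div b ^ j mod b = a div b ^ j mod b"
proof (cases "b = 0")
  case False
  from assms obtain c where "q = b ^ j * (b * c)"
    by (metis dvd_def mult.assoc mult.commute power_Suc)
  then have "(a + q) div b ^ j = a div b ^ j + b * c"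
    using False by simp
  then show ?thesis by simp
qed (use assms in simp)

lemma add_mult_power_div_mod:
  fixes b :: nat
  assumes "v < b ^ j"
  shows "(v + d * b ^ j) div b ^ j mod b = d mod b"
proof -
  have "0 < b ^ j" using assms by linarith
  with assms show ?thesis by simp
qed

lemma badd_digit:
  assumes "i < n"
  shows "badd b x u i = (prefix_value b x n + u) div b ^ i mod b"
proof -
  let ?high = "\<Sum>j\<in>{Suc i..<n}. x j * b ^ j"
  have "prefix_value b x n = prefix_value b x (Suc i) + ?high"
    unfolding prefix_value_def atLeast0LessThan[symmetric]
    using assms by (intro sum.atLeastLessThan_concat[symmetric]) auto
  then have eq: "prefix_value b x n + u = (prefix_value b x (Suc i) + u) + ?high"
    by linarith
  have "b ^ Suc i dvd ?high"
    by (intro dvd_sum dvd_mult le_imp_power_dvd) auto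
  then have "(prefix_value b x n + u) div b ^ i mod b = (prefix_value b x (Suc i) + u) div b ^ i mod b"
    by (simp only: eq div_mod_add_multiple)
  then show ?thesis
    by (simp add: badd_def prefix_value_def lessThan_Suc_atMost)
qed

lemma sum_digits_eq_mod: "(\<Sum>j<n. (N div b ^ j mod b) * b ^ j) = N mod (b::nat) ^ n"
proof (induction n)
  case (Suc n)
  have "N mod b ^ Suc n = b ^ n * (N div b ^ n mod b) + N mod b ^ n"
    by (simp only: power_Suc2 mod_mult2_eq)
  with Suc show ?case by simp
qed simp

lemma prefix_value_badd: "prefix_value b (badd b x u) n = (prefix_value b x n + u) mod b ^ n"
proof -
  have "prefix_value b (badd b x u) n = (\<Sum>j<n. ((prefix_value b x n + u) div b ^ j mod b) * b ^ j)"
    unfolding prefix_value_def[of b "badd b x u"] by (intro sum.cong refl) (simp add: badd_digit[where n = n])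
  then show ?thesis by (simp add: sum_digits_eq_mod)
qed

lemma badd_badd: "badd b (badd b x u) v = badd b x (u + v)"
proof
  fix j
  let ?N = "prefix_value b x (Suc j) + u"
  have "badd b (badd b x u) v j = (?N mod b ^ Suc j + v) div b ^ j mod b"
    by (simp add: badd_digit[of j "Suc j"] prefix_value_badd)
  also have "\<dots> = (?N mod b ^ Suc j + v + b ^ Suc j * (?N div b ^ Suc j)) div b ^ j mod b"
    by (rule div_mod_add_multiple[symmetric]) simp
  also have "\<dots> = (prefix_value b x (Suc j) + (u + v)) div b ^ j mod b"
    using mod_mult_div_eq[of ?N "b ^ Suc j"] by (simp add: ac_simps)
  finally show "badd b (badd b x u) v j = badd b x (u + v) j"
    by (simp add: badd_digit[of j "Suc j"])
qed

lemma badd_add_multiple_low: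
  assumes "b ^ m dvd t" and "j < m"
  shows "badd b x (s + t) j = badd b x s j"
proof -
  have "b ^ Suc j dvd t"
    using assms by (meson Suc_leI dvd_trans le_imp_power_dvd)
  then show ?thesis
    by (simp add: badd_digit[of j "Suc j"] add.assoc[symmetric] div_mod_add_multiple)
qed

section \<open>Blocks\<close>

lemma same_block_refl: "same_block b r j j"
  by (simp add: same_block_def)

lemma same_block_le: "same_block b r l j \<Longrightarrow> l \<le> j"
  unfolding same_block_def by blast

lemma same_block_dig: "same_block b r l j \<Longrightarrow> l \<le> q \<Longrightarrow> q \<le> j \<Longrightarrow> dig b r q = dig b r l"
  unfolding same_block_def by (meson atLeastAtMost_iff)

lemma same_block_mono:
  assumes "same_block b r a d" and "a \<le> a'" and "a' \<le> d'" and "d' \<le> d"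
  shows "same_block b r a' d'"
proof -
  from assms(1) have digs: "\<And>q. q \<in> {a..d} \<Longrightarrow> dig b r q = dig b r a"
    and ends: "a = d \<or> dig b r a = 0 \<or> dig b r a = b - 1"
    unfolding same_block_def by blast+
  have "dig b r q = dig b r a'" if "q \<in> {a'..d'}" for q
    using digs[of q] digs[of a'] that assms by simp
  moreover have "a' = d' \<or> dig b r a' = 0 \<or> dig b r a' = b - 1"
    using ends digs[of a'] assms by auto
  ultimately show ?thesis
    using assms(3) unfolding same_block_def by blast
qed

lemma same_block_trans:
  assumes "same_block b r a c" and "same_block b r c d"
  shows "same_block b r a d"
proof -
  from assms have "a \<le> c" "c \<le> d"
    and digs1: "\<And>q. q \<in> {a..c} \<Longrightarrow> dig b r q = dig b r a"
    and digs2: "\<And>q. q \<in> {c..d} \<Longrightarrow> dig b r q = dig b r c"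
    and ends1: "a = c \<or> dig b r a = 0 \<or> dig b r a = b - 1"
    and ends2: "c = d \<or> dig b r c = 0 \<or> dig b r c = b - 1"
    unfolding same_block_def by blast+
  have "dig b r q = dig b r a" if "q \<in> {a..d}" for q
  proof (cases "q \<le> c")
    case True
    with that show ?thesis by (intro digs1) auto
  next
    case False
    with that have "dig b r q = dig b r c" by (intro digs2) auto
    also have "\<dots> = dig b r a" using \<open>a \<le> c\<close> by (intro digs1) auto
    finally show ?thesis .
  qed
  moreover have "a = d \<or> dig b r a = 0 \<or> dig b r a = b - 1"
    using ends1 ends2 digs1[of c] \<open>a \<le> c\<close> by auto
  ultimately show ?thesis
    using order.trans[OF \<open>a \<le> c\<close> \<open>c \<le> d\<close>] unfolding same_block_def by blast
qed

lemma same_block_single_digit: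
  assumes "dig b r m \<noteq> 0" and "dig b r m \<noteq> b - 1"
  shows "same_block b r m j \<longleftrightarrow> j = m"
proof
  assume "same_block b r m j"
  then have "m = j \<or> dig b r m = 0 \<or> dig b r m = b - 1"
    unfolding same_block_def by blast
  with assms show "j = m"
    by auto
qed (simp add: same_block_refl)

lemma same_block_not_across_low:
  assumes "same_block b r l j" and "l' \<in> nz_block_lows b r" and "l < l'" and "l' \<le> j"
  shows False
proof -
  have "same_block b r (l' - 1) l'"
    using assms by (intro same_block_mono[OF \<open>same_block b r l j\<close>]) auto
  with assms(2,3) show False
    unfolding nz_block_lows_def by simp
qed

lemma same_block_unique_low:
  assumes "l \<in> nz_block_lows b r" and "l' \<in> nz_block_lows b r"
    and "same_block b r l j" and "same_block b r l' j"
  shows "l = l'"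
  using assms same_block_le[OF assms(3)] same_block_le[OF assms(4)]
  by (cases l l' rule: linorder_cases) (auto dest: same_block_not_across_low)

lemma block_low_exists:
  assumes "j < ndigits b r" and "dig b r j \<noteq> 0"
  obtains l where "l \<in> nz_block_lows b r" and "same_block b r l j"
proof -
  define l where "l = (LEAST l. same_block b r l j)"
  have "same_block b r l j"
    unfolding l_def by (rule LeastI[of _ j]) (rule same_block_refl)
  moreover have "\<not> same_block b r (l - 1) l" if "l \<noteq> 0"
  proof
    assume "same_block b r (l - 1) l"
    from this \<open>same_block b r l j\<close> have "same_block b r (l - 1) j"
      by (rule same_block_trans)
    then have "l \<le> l - 1"
      unfolding l_def by (rule Least_le)
    with that show False by simp
  qed
  moreover have "l \<le> j" and "dig b r j = dig b r l"
    using same_block_le[OF \<open>same_block b r l j\<close>] same_block_dig[OF \<open>same_block b r l j\<close>, of j]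
    by auto
  ultimately have "l \<in> nz_block_lows b r"
    using assms by (auto simp: nz_block_lows_def)
  then show ?thesis using \<open>same_block b r l j\<close> by (rule that)
qed

lemma finite_nz_block_lows: "finite (nz_block_lows b r)"
  by (rule finite_subset[of _ "{..<ndigits b r}"]) (auto simp: nz_block_lows_def)

lemma
  shows set_block_lows: "set (rev (sorted_list_of_set (nz_block_lows b r))) = nz_block_lows b r"
    and length_block_lows: "length (rev (sorted_list_of_set (nz_block_lows b r))) = lam b r"
    and sorted_block_lows: "sorted_wrt (>) (rev (sorted_list_of_set (nz_block_lows b r)))"
  using finite_nz_block_lows[of b r] by (simp_all add: lam_def sorted_wrt_rev)

lemma block_low_mem:
  assumes "1 \<le> k" "k \<le> lam b r"
  shows "block_low b r k \<in> nz_block_lows b r"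
proof -
  let ?L = "rev (sorted_list_of_set (nz_block_lows b r))"
  have "?L ! (k - 1) \<in> set ?L"
    using assms length_block_lows[of b r] by (intro nth_mem) simp
  then show ?thesis
    by (simp only: block_low_def set_block_lows)
qed

lemma block_low_decreasing:
  "1 \<le> k \<Longrightarrow> k < k' \<Longrightarrow> k' \<le> lam b r \<Longrightarrow> block_low b r k' < block_low b r k"
  unfolding block_low_def
  by (rule sorted_wrt_nth_less[OF sorted_block_lows]) (auto simp: lam_def)

lemma block_low_less_iff:
  assumes "1 \<le> k" "k \<le> lam b r" "1 \<le> k'" "k' \<le> lam b r"
  shows "block_low b r k' < block_low b r k \<longleftrightarrow> k < k'"
  using assms block_low_decreasing[of k k' b r] block_low_decreasing[of k' k b r]
  by (cases k k' rule: linorder_cases) auto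

lemma block_low_surj:
  assumes "l \<in> nz_block_lows b r"
  obtains k where "1 \<le> k" "k \<le> lam b r" "block_low b r k = l"
proof -
  from assms obtain n where "n < lam b r" "rev (sorted_list_of_set (nz_block_lows b r)) ! n = l"
    by (metis in_set_conv_nth set_block_lows length_block_lows)
  then show ?thesis
    by (intro that[of "Suc n"]) (auto simp: block_low_def)
qed

lemma rtrunc_step:
  assumes "1 \<le> i" and "i \<le> lam b r"
  shows "rtrunc b r i = rtrunc b r (i - 1)
    + (\<Sum>j<ndigits b r. (if same_block b r (block_low b r i) j then dig b r j else 0) * b ^ j)"
proof -
  let ?hidden = "\<lambda>k j. \<exists>k'. k < k' \<and> k' \<le> lam b r \<and> same_block b r (block_low b r k') j"
  let ?B = "same_block b r (block_low b r i)"
  have "i - 1 < k' \<longleftrightarrow> i < k' \<or> k' = i" for k'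
    using assms by auto
  then have hidden_prev: "?hidden (i - 1) j \<longleftrightarrow> ?hidden i j \<or> ?B j" for j
    using assms by blast
  have "\<not> (?hidden i j \<and> ?B j)" for j
  proof
    assume "?hidden i j \<and> ?B j"
    then obtain k' where k': "i < k'" "k' \<le> lam b r" "same_block b r (block_low b r k') j" and "?B j"
      by blast
    with assms have "block_low b r k' = block_low b r i"
      using block_low_mem[of k' b r] block_low_mem[of i b r] by (intro same_block_unique_low) auto
    moreover have "block_low b r k' < block_low b r i"
      using assms k' by (intro block_low_decreasing) auto
    ultimately show False by simp
  qed
  with hidden_prev have "(if ?hidden i j then 0 else dig b r j) * b ^ j
      = (if ?hidden (i - 1) j then 0 else dig b r j) * b ^ j + (if ?B j then dig b r j else 0) * b ^ j" for j
    by auto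
  then show ?thesis
    unfolding rtrunc_def by (simp add: sum.distrib)
qed

lemma power_dvd_rtrunc_prev:
  assumes i: "1 \<le> i" "i \<le> lam b r"
    and block: "\<And>j. same_block b r (block_low b r i) j \<longleftrightarrow> block_low b r i \<le> j \<and> j < M"
  shows "b ^ M dvd rtrunc b r (i - 1)"
  unfolding rtrunc_def
proof (intro dvd_sum)
  fix j
  let ?hidden = "\<exists>k'. i - 1 < k' \<and> k' \<le> lam b r \<and> same_block b r (block_low b r k') j"
  assume "j \<in> {..<ndigits b r}"
  have "?hidden" if "j < M" and "dig b r j \<noteq> 0"
  proof (cases "block_low b r i \<le> j")
    case True
    with \<open>j < M\<close> block i show ?thesis by auto
  next
    case False
    from \<open>j \<in> {..<ndigits b r}\<close> \<open>dig b r j \<noteq> 0\<close> obtain l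
      where "l \<in> nz_block_lows b r" "same_block b r l j"
      by (auto elim: block_low_exists)
    moreover from \<open>l \<in> nz_block_lows b r\<close> obtain k
      where k: "1 \<le> k" "k \<le> lam b r" "block_low b r k = l"
      by (rule block_low_surj)
    moreover have "l < block_low b r i"
      using False same_block_le[OF \<open>same_block b r l j\<close>] by simp
    then have "i < k"
      using i k block_low_less_iff[of i b r k] by simp
    ultimately show ?thesis by (intro exI[of _ k]) auto
  qed
  moreover have "b ^ M dvd b ^ j" if "M \<le> j"
    using that by (rule le_imp_power_dvd)
  ultimately show "b ^ M dvd (if ?hidden then 0 else dig b r j) * b ^ j"
    by (cases "M \<le> j"; cases "dig b r j = 0") auto
qed

section \<open>Weights of digit runs\<close>

lemma summable_poly_times_geometric:
  fixes q :: real
  assumes "\<bar>q\<bar> < 1"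
  shows "summable (\<lambda>n. real (Suc n) ^ k * q ^ n)"
proof -
  have "(\<lambda>n. real (Suc n) / real (Suc (Suc n))) \<longlonglongrightarrow> 1"
    using LIMSEQ_Suc[OF LIMSEQ_n_over_Suc_n] by simp
  then have "(\<lambda>n. (real (Suc n) / real (Suc (Suc n))) ^ k) \<longlonglongrightarrow> 1 ^ k"
    by (rule tendsto_power)
  then have "(\<lambda>n. norm (real (Suc n) ^ k) / norm (real (Suc (Suc n)) ^ k)) \<longlonglongrightarrow> 1"
    by (simp add: power_divide)
  then have "conv_radius (\<lambda>n. real (Suc n) ^ k) = 1"
    by (intro conv_radius_ratio_limit_nonzero[of _ 1]) simp_all
  with assms show ?thesis
    by (intro summable_in_conv_radius) simp
qed

(* If N x >= n implies x \<in> A n, then level_weight k A x >= (N x + 1)^k; unlike (N x + 1)^k, the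
   weight is measurable as soon as all A n are. *)
definition level_weight :: "nat \<Rightarrow> (nat \<Rightarrow> 'a set) \<Rightarrow> 'a \<Rightarrow> ennreal" where
  "level_weight k A x = (\<Sum>n. ennreal (real (Suc n) ^ k) * indicator (A n) x)"

lemma level_weight_ge:
  assumes "x \<in> A n"
  shows "ennreal (real (Suc n) ^ k) \<le> level_weight k A x"
proof -
  let ?f = "\<lambda>n. ennreal (real (Suc n) ^ k) * indicator (A n) x"
  have "\<not> suminf ?f < ?f n"
    using ennreal_suminf_lessD[of ?f "?f n" n] by auto
  then show ?thesis
    using assms by (simp add: level_weight_def not_less)
qed

lemma level_weight_top:
  assumes "\<And>n. x \<in> A n"
  shows "level_weight k A x = \<top>"
proof -
  have "\<not> summable (\<lambda>n. real (Suc n) ^ k)"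
  proof
    assume "summable (\<lambda>n. real (Suc n) ^ k)"
    then have "(\<lambda>n. real (Suc n) ^ k) \<longlonglongrightarrow> 0"
      by (rule summable_LIMSEQ_zero)
    moreover have "\<And>n. 1 \<le> real (Suc n) ^ k"
      by simp
    ultimately show False
      using LIMSEQ_le_const[of _ 0 1] by force
  qed
  then have "(\<Sum>n. ennreal (real (Suc n) ^ k)) = \<top>"
    by (simp add: summable_iff_suminf_neq_top)
  then show ?thesis
    using assms by (simp add: level_weight_def)
qed

lemma nn_integral_level_weight:
  assumes sets: "\<And>n. A n \<in> sets M" and measure: "\<And>n. emeasure M (A n) \<le> ennreal (q ^ n)"
    and "0 \<le> q" and "q < 1"
  shows "(\<integral>\<^sup>+ x. level_weight k A x \<partial>M) \<le> ennreal (\<Sum>n. real (Suc n) ^ k * q ^ n)"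
proof -
  have "(\<integral>\<^sup>+ x. level_weight k A x \<partial>M) = (\<Sum>n. ennreal (real (Suc n) ^ k) * emeasure M (A n))"
    unfolding level_weight_def using sets
    by (simp add: nn_integral_suminf nn_integral_cmult_indicator)
  also have "\<dots> \<le> (\<Sum>n. ennreal (real (Suc n) ^ k * q ^ n))"
  proof (rule suminf_le)
    fix n
    have "ennreal (real (Suc n) ^ k) * emeasure M (A n) \<le> ennreal (real (Suc n) ^ k) * ennreal (q ^ n)"
      by (rule mult_left_mono[OF measure]) simp
    then show "ennreal (real (Suc n) ^ k) * emeasure M (A n) \<le> ennreal (real (Suc n) ^ k * q ^ n)"
      using \<open>0 \<le> q\<close> by (simp add: ennreal_mult)
  qed simp_all
  also have "\<dots> = ennreal (\<Sum>n. real (Suc n) ^ k * q ^ n)"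
  proof (rule suminf_ennreal2)
    show "summable (\<lambda>n. real (Suc n) ^ k * q ^ n)"
      using \<open>0 \<le> q\<close> \<open>q < 1\<close> by (intro summable_poly_times_geometric) simp
  qed (simp add: \<open>0 \<le> q\<close>)
  finally show ?thesis .
qed

lemma borel_measurable_level_weight [measurable (raw)]:
  assumes [measurable]: "\<And>n. A n \<in> sets M"
  shows "level_weight k A \<in> borel_measurable M"
  unfolding level_weight_def by measurable

lemma power_mult_add_le:
  fixes a c d :: real
  assumes "0 \<le> a" and "0 \<le> c" and "0 \<le> d"
  shows "(c * (a + d)) ^ k \<le> (2 * c) ^ k * (a ^ k + d ^ k)"
proof -
  have "c * (a + d) \<le> c * (2 * max a d)"
    using assms by (intro mult_left_mono) auto
  then have "(c * (a + d)) ^ k \<le> (2 * c * max a d) ^ k"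
    using assms by (intro power_mono) (auto simp: ac_simps)
  also have "\<dots> = (2 * c) ^ k * max a d ^ k"
    by (simp add: power_mult_distrib)
  also have "max a d ^ k \<le> a ^ k + d ^ k"
    using assms by (simp add: max_def)
  finally show ?thesis
    using assms by (simp add: mult_left_mono)
qed

definition digit_cylinder :: "nat \<Rightarrow> (nat \<Rightarrow> nat) \<Rightarrow> nat \<Rightarrow> (nat \<Rightarrow> nat) set" where
  "digit_cylinder a v n = {x. \<forall>j<n. x (a + j) = v j}"

lemma space_haar [simp]: "space (haar b) = UNIV"
  by (simp add: haar_def space_PiM)

lemma sets_digit_cylinder [measurable]: "digit_cylinder a v n \<in> sets (haar b)"
proof -
  have "digit_cylinder a v n = (\<Inter>j<n. {x \<in> space (haar b). x (a + j) = v j}) \<inter> space (haar b)"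
    by (auto simp: digit_cylinder_def)
  also have "\<dots> \<in> sets (haar b)"
    unfolding haar_def by measurable
  finally show ?thesis .
qed

definition moment_bound :: "nat \<Rightarrow> nat \<Rightarrow> real" where
  "moment_bound b k = 2 * (2 * real (b - 1)) ^ k * (\<Sum>n. real (Suc n) ^ k * (1 / real b) ^ n)"

context
  fixes b :: nat
  assumes b_ge_2: "2 \<le> b"
begin

section \<open>Adding one block\<close>

lemma sum_max_digits: "m \<le> M \<Longrightarrow> (\<Sum>j\<in>{m..<M}. (b - 1) * b ^ j) + b ^ m = b ^ M"
proof (induction M rule: dec_induct)
  case (step M)
  have "(b - 1) * b ^ M + b ^ M = b ^ Suc M" using b_ge_2 by (cases b) auto
  with step show ?case by simp
qed simp

lemma sum_digits_add_power_less:
  assumes digits: "\<And>l. l < j \<Longrightarrow> c l < b" and "i < j" and "c i \<noteq> b - 1"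
  shows "(\<Sum>l<j. c l * b ^ l) + b ^ i < b ^ j"
proof -
  let ?c' = "\<lambda>l. c l + (if l = i then 1 else 0)"
  have "(\<Sum>l<j. c l * b ^ l) + b ^ i = (\<Sum>l<j. c l * b ^ l) + (\<Sum>l<j. if l = i then b ^ l else 0)"
    using \<open>i < j\<close> by simp
  also have "\<dots> = (\<Sum>l<j. ?c' l * b ^ l)"
    unfolding sum.distrib[symmetric] by (intro sum.cong) auto
  also have "\<dots> \<le> (\<Sum>l\<in>{0..<j}. (b - 1) * b ^ l)"
  proof -
    have "?c' l \<le> b - 1" if "l < j" for l
      using digits[OF that] \<open>c i \<noteq> b - 1\<close> by (cases "l = i") auto
    then show ?thesis
      unfolding atLeast0LessThan by (intro sum_mono mult_right_mono) auto
  qed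
  also have "\<dots> < b ^ j"
    using sum_max_digits[of 0 j] by simp
  finally show ?thesis .
qed

lemma prefix_value_less:
  assumes "\<And>j. x j < b"
  shows "prefix_value b x n < b ^ n"
proof -
  have "x j \<le> b - 1" for j
    using assms[of j] by linarith
  then have "prefix_value b x n \<le> (\<Sum>j\<in>{0..<n}. (b - 1) * b ^ j)"
    unfolding prefix_value_def atLeast0LessThan by (intro sum_mono mult_right_mono) auto
  also have "\<dots> < b ^ n"
    using sum_max_digits[of 0 n] by simp
  finally show ?thesis .
qed

lemma badd_less: "badd b x u j < b"
  using b_ge_2 by (simp add: badd_def)

lemma badd_zero:
  assumes "\<And>j. x j < b"
  shows "badd b x 0 = x"
proof
  fix j
  have "badd b x 0 j = (prefix_value b x j + x j * b ^ j) div b ^ j mod b"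
    by (simp add: badd_digit[of j "Suc j"] prefix_value_Suc)
  also have "\<dots> = x j"
    using prefix_value_less[OF assms] assms by (simp only: add_mult_power_div_mod mod_less)
  finally show "badd b x 0 j = x j" .
qed

lemma prefix_value_digit:
  assumes "\<And>j. x j < b" and "j < n"
  shows "prefix_value b x n div b ^ j mod b = x j"
  using badd_digit[OF \<open>j < n\<close>, of b x 0] badd_zero[OF assms(1)] by simp

lemma funpow_Todo:
  assumes "\<And>j. x j < b"
  shows "(Todo b ^^ n) x = badd b x n"
  by (induction n) (simp_all add: badd_zero assms Todo_def badd_badd)

lemma badd_low_digits:
  assumes "\<And>j. y j < b" and "b ^ m dvd t" and "j < m"
  shows "badd b y t j = y j"
  using badd_add_multiple_low[OF assms(2,3), of y 0] badd_zero[OF assms(1)] by simp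

lemma badd_high_digits:
  assumes y: "\<And>j. y j < b" and "t < b ^ i" and "i < j" and "y i \<noteq> b - 1"
  shows "badd b y t j = y j"
proof -
  have "prefix_value b y j + b ^ i < b ^ j"
    unfolding prefix_value_def using assms by (intro sum_digits_add_power_less) auto
  with \<open>t < b ^ i\<close> have "prefix_value b y j + t < b ^ j"
    by linarith
  then have "(prefix_value b y j + t + y j * b ^ j) div b ^ j mod b = y j"
    using y by (simp only: add_mult_power_div_mod mod_less)
  then show ?thesis
    by (simp add: badd_digit[of j "Suc j"] prefix_value_Suc ac_simps)
qed

(* Adding t = b^M - b^m subtracts b^m, which borrows only up to the nonzero digit p, and adds b^M,
   which does not affect the digits below M. *)
lemma badd_block_digits:
  assumes y: "\<And>j. y j < b" and t: "t + b ^ m = b ^ M"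
    and "m \<le> p" and "p < j" and "j < M" and "y p \<noteq> 0"
  shows "badd b y t j = y j"
proof -
  have "b ^ m \<le> b ^ p"
    using b_ge_2 \<open>m \<le> p\<close> by (simp add: power_increasing)
  also have "\<dots> \<le> y p * b ^ p"
    using \<open>y p \<noteq> 0\<close> by simp
  also have "\<dots> \<le> prefix_value b y j"
    unfolding prefix_value_def using \<open>p < j\<close> by (intro member_le_sum) auto
  finally have ge: "b ^ m \<le> prefix_value b y j" .
  have "b ^ Suc j dvd b ^ M"
    using \<open>j < M\<close> by (intro le_imp_power_dvd) simp
  moreover have "prefix_value b y (Suc j) + t = (prefix_value b y j - b ^ m + y j * b ^ j) + b ^ M"
    using ge t by (simp add: prefix_value_Suc)
  ultimately have "badd b y t j = (prefix_value b y j - b ^ m + y j * b ^ j) div b ^ j mod b"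
    by (simp add: badd_digit[of j "Suc j"] div_mod_add_multiple)
  also have "\<dots> = y j"
    using prefix_value_less[OF y, where n = j] y by (simp only: add_mult_power_div_mod mod_less less_imp_diff_less)
  finally show ?thesis .
qed

lemma Delta_bound_changed_digits:
  assumes y: "\<And>j. y j < b" and "finite S" and unchanged: "\<And>j. j \<notin> S \<Longrightarrow> badd b y t j = y j"
  shows "\<bar>Delta b t y\<bar> \<le> real ((b - 1) * card S)"
proof -
  define d where "d j = real (badd b y t j) - real (y j)" for j
  obtain K where "S \<subseteq> {..K}"
    using \<open>finite S\<close> by (auto simp: finite_nat_set_iff_bounded_le)
  have "real_of_int (DeltaK b t k y) = (\<Sum>j\<in>S. d j)" if "K \<le> k" for k
  proof -
    have "real_of_int (DeltaK b t k y) = (\<Sum>j\<le>k. d j)"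
      by (simp add: DeltaK_def sk_def d_def sum_subtractf)
    also have "\<dots> = (\<Sum>j\<in>S. d j)"
      using \<open>S \<subseteq> {..K}\<close> that by (intro sum.mono_neutral_right) (auto simp: d_def unchanged)
    finally show ?thesis .
  qed
  then have "(\<lambda>k. real_of_int (DeltaK b t k y)) \<longlonglongrightarrow> (\<Sum>j\<in>S. d j)"
    by (intro tendsto_eventually) (auto simp: eventually_sequentially)
  then have "Delta b t y = (\<Sum>j\<in>S. d j)"
    unfolding Delta_def by (simp add: convergentI limI)
  also have "\<bar>\<dots>\<bar> \<le> (\<Sum>j\<in>S. real (b - 1))"
  proof -
    have "\<bar>d j\<bar> \<le> real (b - 1)" for j
      using badd_less[of y t j] y[of j] by (simp add: d_def abs_le_iff)
    then show ?thesis
      by (intro order_trans[OF sum_abs sum_mono])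
  qed
  finally show ?thesis by (simp add: mult.commute)
qed

lemma Delta_block_bound:
  assumes y: "\<And>j. y j < b" and "b ^ m dvd t" and "t < b ^ M"
    and block: "M = Suc m \<or> t + b ^ m = b ^ M"
    and zeros: "y (m + Z) \<noteq> 0 \<or> M \<le> Suc (m + Z)"
    and run: "y (M + R) \<noteq> b - 1"
  shows "\<bar>Delta b t y\<bar> \<le> real ((b - 1) * (Z + R + 2))"
proof -
  let ?S = "{m..m + Z} \<union> {M..M + R}"
  have "badd b y t j = y j" if "j \<notin> ?S" for j
  proof -
    have "j < m \<or> (m + Z < j \<and> j < M) \<or> M + R < j"
      using that by auto
    then consider "j < m" | "m + Z < j" "j < M" | "M + R < j"
      by blast
    then show ?thesis
    proof cases
      case 1
      then show ?thesis using y \<open>b ^ m dvd t\<close> by (intro badd_low_digits)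
    next
      case 2
      with block zeros have "t + b ^ m = b ^ M" "y (m + Z) \<noteq> 0"
        by auto
      with 2 show ?thesis using y by (intro badd_block_digits[where p = "m + Z"]) auto
    next
      case 3
      have "b ^ M \<le> b ^ (M + R)"
        using b_ge_2 by (intro power_increasing) auto
      with \<open>t < b ^ M\<close> have "t < b ^ (M + R)"
        by linarith
      with 3 show ?thesis using y run by (intro badd_high_digits) auto
    qed
  qed
  then have "\<bar>Delta b t y\<bar> \<le> real ((b - 1) * card ?S)"
    using y by (intro Delta_bound_changed_digits) auto
  also have "card ?S \<le> Z + R + 2"
    using card_Un_le[of "{m..m + Z}" "{M..M + R}"] by simp
  then have "real ((b - 1) * card ?S) \<le> real ((b - 1) * (Z + R + 2))"
    by (intro of_nat_mono mult_left_mono) auto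
  finally show ?thesis .
qed

lemma badd_shift:
  assumes x: "\<And>j. x j < b" and "b ^ M dvd s"
  shows "badd b x s (M + j) = badd b (\<lambda>l. x (M + l)) (s div b ^ M) j"
proof -
  let ?x' = "\<lambda>l. x (M + l)"
  from \<open>b ^ M dvd s\<close> obtain c where s: "s = b ^ M * c" ..
  have "prefix_value b x (M + Suc j) + s = prefix_value b x M + b ^ M * (prefix_value b ?x' (Suc j) + c)"
    using prefix_value_add[of b x M "Suc j"] s by (simp add: algebra_simps)
  moreover have "prefix_value b x M < b ^ M"
    using x by (rule prefix_value_less)
  ultimately have "(prefix_value b x (M + Suc j) + s) div b ^ M = prefix_value b ?x' (Suc j) + c"
    using b_ge_2 by simp
  moreover have "s div b ^ M = c"
    using s b_ge_2 by simp
  ultimately show ?thesis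
    by (simp add: badd_digit[of "M + j" "M + Suc j"] badd_digit[of j "Suc j"] power_add div_mult2_eq)
qed

lemma max_digit_run_cylinder:
  assumes x: "\<And>j. x j < b" and "b ^ M dvd s" and max: "\<And>i. i < n \<Longrightarrow> badd b x s (M + i) = b - 1"
  shows "x \<in> digit_cylinder M (dig b (b ^ n - 1 - s div b ^ M mod b ^ n)) n"
proof -
  let ?x' = "\<lambda>l. x (M + l)" and ?u = "s div b ^ M mod b ^ n"
  have x': "\<And>l. ?x' l < b" using x by simp
  have "(prefix_value b ?x' n + s div b ^ M) mod b ^ n = prefix_value b (badd b ?x' (s div b ^ M)) n"
    by (simp add: prefix_value_badd)
  also have "\<dots> = (\<Sum>i\<in>{0..<n}. (b - 1) * b ^ i)"
    unfolding prefix_value_def atLeast0LessThan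
    using max badd_shift[OF x \<open>b ^ M dvd s\<close>] by (intro sum.cong) auto
  also have "\<dots> = b ^ n - 1"
    using sum_max_digits[of 0 n] by simp
  finally have "(prefix_value b ?x' n + ?u) mod b ^ n = b ^ n - 1"
    by (simp add: mod_add_right_eq)
  moreover have "prefix_value b ?x' n < b ^ n"
    using x' by (rule prefix_value_less)
  moreover have "?u < b ^ n"
    using b_ge_2 by simp
  ultimately have "prefix_value b ?x' n = b ^ n - 1 - ?u"
    by (cases "prefix_value b ?x' n + ?u < b ^ n") (auto simp: le_mod_geq)
  then show ?thesis
    using prefix_value_digit[where x = ?x' and n = n, OF x'] by (simp add: digit_cylinder_def dig_def)
qed

section \<open>The truncations r[i]\<close>

lemma ndigits_gt: "r < b ^ ndigits b r"
  unfolding ndigits_def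
proof (rule LeastI)
  have "r < 2 ^ r" by (rule less_exp)
  also have "(2::nat) ^ r \<le> b ^ r" using b_ge_2 by (rule power_mono) simp
  finally show "r < b ^ r" .
qed

lemma dig_high:
  assumes "ndigits b r \<le> j"
  shows "dig b r j = 0"
proof -
  have "b ^ ndigits b r \<le> b ^ j"
    using assms b_ge_2 by (intro power_increasing) auto
  with ndigits_gt[of r] show ?thesis
    by (simp add: dig_def)
qed

lemma dig_less: "dig b r j < b"
  using b_ge_2 by (simp add: dig_def)

lemma block_interval:
  assumes low: "m \<in> nz_block_lows b r"
  obtains M where "m < M" and "M \<le> ndigits b r" and "\<And>j. same_block b r m j \<longleftrightarrow> m \<le> j \<and> j < M"
    and "M = Suc m \<or> (\<forall>j\<in>{m..<M}. dig b r j = b - 1)"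
proof (cases "dig b r m = b - 1")
  case False
  with low have "same_block b r m j \<longleftrightarrow> m \<le> j \<and> j < Suc m" for j
    using same_block_single_digit[of b r m j] by (auto simp: nz_block_lows_def)
  with low show ?thesis
    by (intro that[of "Suc m"]) (auto simp: nz_block_lows_def)
next
  case True
  let ?P = "\<lambda>j. m < j \<and> dig b r j \<noteq> b - 1"
  define M where "M = (LEAST j. ?P j)"
  have "?P (ndigits b r)"
    using low dig_high[of r "ndigits b r"] b_ge_2 by (auto simp: nz_block_lows_def)
  then have "?P M" and "M \<le> ndigits b r"
    unfolding M_def by (rule LeastI, rule Least_le)
  have run: "dig b r j = b - 1" if "m \<le> j" "j < M" for j
    using True not_less_Least[of j ?P] that unfolding M_def[symmetric]
    by (cases "m = j") auto
  have "same_block b r m j \<longleftrightarrow> m \<le> j \<and> j < M" for j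
  proof
    assume sb: "same_block b r m j"
    have "j < M"
    proof (rule ccontr)
      assume "\<not> j < M"
      with \<open>?P M\<close> have "dig b r M = dig b r m"
        by (intro same_block_dig[OF sb]) auto
      with \<open>?P M\<close> True show False by simp
    qed
    with same_block_le[OF sb] show "m \<le> j \<and> j < M" by simp
  next
    assume "m \<le> j \<and> j < M"
    with run True show "same_block b r m j"
      unfolding same_block_def by auto
  qed
  with \<open>?P M\<close> \<open>M \<le> ndigits b r\<close> run show ?thesis
    by (intro that[of M]) auto
qed

lemma block_value_bounds:
  assumes "m < M" and shape: "M = Suc m \<or> (\<forall>j\<in>{m..<M}. d j = b - 1)" and "d m < b"
    and t: "t = (\<Sum>j\<in>{m..<M}. d j * b ^ j)"
  shows "b ^ m dvd t" and "t < b ^ M" and "M = Suc m \<or> t + b ^ m = b ^ M"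
proof -
  show "b ^ m dvd t"
    unfolding t by (intro dvd_sum dvd_mult le_imp_power_dvd) auto
  have "t < b ^ M \<and> (M = Suc m \<or> t + b ^ m = b ^ M)"
  proof (cases "M = Suc m")
    case True
    with \<open>d m < b\<close> b_ge_2 show ?thesis
      by (simp add: t)
  next
    case False
    with shape have "t = (\<Sum>j\<in>{m..<M}. (b - 1) * b ^ j)"
      by (simp add: t)
    then have "t + b ^ m = b ^ M"
      using sum_max_digits \<open>m < M\<close> by simp
    moreover have "0 < b ^ m"
      using b_ge_2 by simp
    ultimately show ?thesis by linarith
  qed
  then show "t < b ^ M" and "M = Suc m \<or> t + b ^ m = b ^ M"
    by auto
qed

lemma rtrunc_increment:
  assumes "1 \<le> i" and "i \<le> lam b r"
  obtains m M where "b ^ M dvd rtrunc b r (i - 1)"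
    and "b ^ m dvd rtrunc b r i - rtrunc b r (i - 1)" and "rtrunc b r i - rtrunc b r (i - 1) < b ^ M"
    and "M = Suc m \<or> rtrunc b r i - rtrunc b r (i - 1) + b ^ m = b ^ M"
proof -
  define m where "m = block_low b r i"
  have "m \<in> nz_block_lows b r"
    unfolding m_def using assms by (rule block_low_mem)
  then obtain M where "m < M" and "M \<le> ndigits b r"
    and block: "\<And>j. same_block b r m j \<longleftrightarrow> m \<le> j \<and> j < M"
    and shape: "M = Suc m \<or> (\<forall>j\<in>{m..<M}. dig b r j = b - 1)"
    by (rule block_interval) blast
  define t where "t = rtrunc b r i - rtrunc b r (i - 1)"
  have "t = (\<Sum>j<ndigits b r. (if m \<le> j \<and> j < M then dig b r j else 0) * b ^ j)"
    using rtrunc_step[OF assms] block by (simp add: t_def m_def)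
  also have "\<dots> = (\<Sum>j\<in>{m..<M}. dig b r j * b ^ j)"
    using \<open>M \<le> ndigits b r\<close> by (intro sum.mono_neutral_cong_right) auto
  finally have t: "t = (\<Sum>j\<in>{m..<M}. dig b r j * b ^ j)" .
  have "b ^ M dvd rtrunc b r (i - 1)"
    using assms block by (intro power_dvd_rtrunc_prev) (auto simp: m_def)
  with block_value_bounds[OF \<open>m < M\<close> shape dig_less t] show ?thesis
    by (intro that[of M m]) (auto simp: t_def)
qed

section \<open>Moments\<close>

lemma digits_nonempty: "{..<b} \<noteq> {}"
  using b_ge_2 by (metis lessThan_iff order_less_le_trans pos2 emptyE)

lemma AE_haar_digits: "AE x in haar b. \<forall>j. x j < b"
proof -
  have "AE x in haar b. x j < b" for j
    unfolding haar_def
    using digits_nonempty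
    by (intro AE_PiM_component) (auto simp: AE_measure_pmf_iff intro: measure_pmf.prob_space_axioms)
  then show ?thesis
    by (simp add: AE_all_countable)
qed

lemma emeasure_digit_cylinder: "emeasure (haar b) (digit_cylinder a v n) \<le> ennreal ((1 / real b) ^ n)"
proof -
  interpret product_prob_space "\<lambda>_::nat. measure_pmf (pmf_of_set {..<b})" UNIV
    by unfold_locales
  let ?J = "(\<lambda>j. a + j) ` {..<n}"
  have "digit_cylinder a v n = {x \<in> space (haar b). \<forall>i\<in>?J. x i \<in> {v (i - a)}}"
    by (auto simp: digit_cylinder_def)
  moreover have "emeasure (haar b) {x \<in> space (haar b). \<forall>i\<in>?J. x i \<in> {v (i - a)}}
      = (\<Prod>i\<in>?J. emeasure (measure_pmf (pmf_of_set {..<b})) {v (i - a)})"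
    unfolding haar_def by (rule emeasure_PiM_Collect) auto
  ultimately have "emeasure (haar b) (digit_cylinder a v n)
      = (\<Prod>i\<in>?J. emeasure (measure_pmf (pmf_of_set {..<b})) {v (i - a)})"
    by simp
  also have "\<dots> = ennreal (\<Prod>i\<in>?J. pmf (pmf_of_set {..<b}) (v (i - a)))"
    by (simp add: emeasure_pmf_single prod_ennreal)
  also have "\<dots> \<le> ennreal (\<Prod>i\<in>?J. 1 / real b)"
    using digits_nonempty by (intro ennreal_leI prod_mono) (auto simp: indicator_def)
  also have "(\<Prod>i\<in>?J. 1 / real b) = (1 / real b) ^ n"
    by (simp add: card_image)
  finally show ?thesis .
qed


lemma zero_run_cylinder:
  assumes x: "\<And>j. x j < b" and "b ^ M dvd s"
  obtains Z where "badd b x s (m + Z) \<noteq> 0 \<or> M \<le> Suc (m + Z)" and "x \<in> digit_cylinder m (\<lambda>_. 0) Z"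
proof -
  let ?P = "\<lambda>Z. badd b x s (m + Z) \<noteq> 0 \<or> M \<le> Suc (m + Z)"
  define Z where "Z = (LEAST Z. ?P Z)"
  have "?P Z"
    unfolding Z_def by (rule LeastI[of _ M]) simp
  moreover have "x (m + i) = 0" if "i < Z" for i
  proof -
    have "\<not> ?P i"
      using that unfolding Z_def by (rule not_less_Least)
    then show ?thesis
      using badd_low_digits[OF x \<open>b ^ M dvd s\<close>, of "m + i"] by auto
  qed
  ultimately show ?thesis
    by (intro that[of Z]) (auto simp: digit_cylinder_def)
qed

lemma Delta_level_weight_bound:
  assumes x: "\<And>j. x j < b" and "b ^ M dvd s" and "b ^ m dvd t" and "t < b ^ M"
    and "M = Suc m \<or> t + b ^ m = b ^ M"
  shows "ennreal (\<bar>Delta b t (badd b x s)\<bar> ^ k) \<le> ennreal ((2 * real (b - 1)) ^ k) *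
    (level_weight k (digit_cylinder m (\<lambda>_. 0)) x
     + level_weight k (\<lambda>n. digit_cylinder M (dig b (b ^ n - 1 - s div b ^ M mod b ^ n)) n) x)"
    (is "_ \<le> ennreal ?c * (?A + ?B)")
proof (cases "\<exists>R. badd b x s (M + R) \<noteq> b - 1")
  case True
  obtain Z where zeros: "badd b x s (m + Z) \<noteq> 0 \<or> M \<le> Suc (m + Z)"
    and zero_run: "x \<in> digit_cylinder m (\<lambda>_. 0) Z"
    using zero_run_cylinder[OF x \<open>b ^ M dvd s\<close>] .
  from zero_run have A: "ennreal (real (Suc Z) ^ k) \<le> ?A"
    by (rule level_weight_ge)
  define R where "R = (LEAST R. badd b x s (M + R) \<noteq> b - 1)"
  have run: "badd b x s (M + R) \<noteq> b - 1"
    unfolding R_def using True by (rule LeastI_ex)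
  have "badd b x s (M + i) = b - 1" if "i < R" for i
    using not_less_Least[OF that[unfolded R_def]] by simp
  then have "ennreal (real (Suc R) ^ k) \<le> ?B"
    by (intro level_weight_ge max_digit_run_cylinder[OF x \<open>b ^ M dvd s\<close>])
  with A have weights: "ennreal (real (Suc Z) ^ k + real (Suc R) ^ k) \<le> ?A + ?B"
    by (simp add: add_mono)
  have "\<bar>Delta b t (badd b x s)\<bar> \<le> real ((b - 1) * (Z + R + 2))"
    using assms zeros run by (intro Delta_block_bound badd_less) auto
  also have "\<dots> = real (b - 1) * (real (Suc Z) + real (Suc R))"
    by (simp only: of_nat_mult of_nat_add add_Suc_right add_Suc numeral_2_eq_2 add_0_right of_nat_Suc) simp
  finally have "\<bar>Delta b t (badd b x s)\<bar> ^ k \<le> ?c * (real (Suc Z) ^ k + real (Suc R) ^ k)"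
    by (intro order_trans[OF power_mono power_mult_add_le]) simp_all
  then have "ennreal (\<bar>Delta b t (badd b x s)\<bar> ^ k) \<le> ennreal (?c * (real (Suc Z) ^ k + real (Suc R) ^ k))"
    by (rule ennreal_leI)
  also have "\<dots> = ennreal ?c * ennreal (real (Suc Z) ^ k + real (Suc R) ^ k)"
    by (rule ennreal_mult') simp
  also have "\<dots> \<le> ennreal ?c * (?A + ?B)"
    using weights by (rule mult_left_mono) simp
  finally show ?thesis .
next
  case False
  then have "level_weight k (\<lambda>n. digit_cylinder M (dig b (b ^ n - 1 - s div b ^ M mod b ^ n)) n) x = \<top>"
    by (intro level_weight_top max_digit_run_cylinder[OF x \<open>b ^ M dvd s\<close>]) auto
  with b_ge_2 show ?thesis
    by (simp add: ennreal_mult_top)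
qed

lemma moment_bound_nonneg: "0 \<le> moment_bound b k"
  unfolding moment_bound_def using b_ge_2
  by (intro mult_nonneg_nonneg suminf_nonneg summable_poly_times_geometric) auto

lemma nn_integral_Delta_block:
  assumes "b ^ M dvd s" and "b ^ m dvd t" and "t < b ^ M" and "M = Suc m \<or> t + b ^ m = b ^ M"
  shows "(\<integral>\<^sup>+ x. ennreal (\<bar>Delta b t (badd b x s)\<bar> ^ k) \<partial>haar b) \<le> ennreal (moment_bound b k)"
proof -
  let ?c = "(2 * real (b - 1)) ^ k" and ?S = "\<Sum>n. real (Suc n) ^ k * (1 / real b) ^ n"
  let ?A = "level_weight k (digit_cylinder m (\<lambda>_. 0))"
  let ?B = "level_weight k (\<lambda>n. digit_cylinder M (dig b (b ^ n - 1 - s div b ^ M mod b ^ n)) n)"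
  have moment: "(\<integral>\<^sup>+ x. level_weight k (\<lambda>n. digit_cylinder a (v n) n) x \<partial>haar b) \<le> ennreal ?S" for a v
    using b_ge_2 by (intro nn_integral_level_weight[OF sets_digit_cylinder emeasure_digit_cylinder]) auto
  have meas: "?A \<in> borel_measurable (haar b)" "?B \<in> borel_measurable (haar b)"
    by measurable
  have "AE x in haar b. ennreal (\<bar>Delta b t (badd b x s)\<bar> ^ k) \<le> ennreal ?c * (?A x + ?B x)"
    using AE_haar_digits by eventually_elim (rule Delta_level_weight_bound[OF _ assms], simp)
  then have "(\<integral>\<^sup>+ x. ennreal (\<bar>Delta b t (badd b x s)\<bar> ^ k) \<partial>haar b)
      \<le> (\<integral>\<^sup>+ x. ennreal ?c * (?A x + ?B x) \<partial>haar b)"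
    by (rule nn_integral_mono_AE)
  also have "\<dots> = ennreal ?c * ((\<integral>\<^sup>+ x. ?A x \<partial>haar b) + (\<integral>\<^sup>+ x. ?B x \<partial>haar b))"
    using meas by (simp only: nn_integral_cmult nn_integral_add borel_measurable_add)
  also have "\<dots> \<le> ennreal ?c * (ennreal ?S + ennreal ?S)"
    using moment[of m "\<lambda>_ _. 0"] moment[of M "\<lambda>n. dig b (b ^ n - 1 - s div b ^ M mod b ^ n)"]
    by (intro mult_left_mono add_mono) simp_all
  also have "\<dots> = ennreal (moment_bound b k)"
  proof -
    have S: "0 \<le> ?S"
      using b_ge_2 by (intro suminf_nonneg summable_poly_times_geometric) auto
    have "moment_bound b k = ?c * (?S + ?S)"
      by (simp add: moment_bound_def algebra_simps)
    then show ?thesis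
      by (simp only: ennreal_mult'[of ?c] ennreal_plus[OF S S] zero_le_power mult_nonneg_nonneg
          zero_le_numeral of_nat_0_le_iff)
  qed
  finally show ?thesis .
qed

lemma Xr_eq_Delta:
  assumes "\<And>j. x j < b"
  shows "Xr b r i x = Delta b (rtrunc b r i - rtrunc b r (i - 1)) (badd b x (rtrunc b r (i - 1)))"
  using assms by (simp add: Xr_def funpow_Todo)

end

theorem mainTheorem17:
  fixes b :: nat
  assumes "b \<ge> 2"
  shows "\<forall>k::nat. \<exists>C::real. C > 0 \<and> (\<forall>r::nat. \<forall>i::nat. 1 \<le> r \<longrightarrow> 1 \<le> i \<longrightarrow> i \<le> lam b r \<longrightarrow>
           (\<integral>\<^sup>+ x. ennreal (\<bar>Xr b r i x\<bar> ^ k) \<partial>haar b) \<le> ennreal C)"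
proof (intro allI exI conjI impI)
  fix k r i :: nat
  show "0 < moment_bound b k + 1"
    using moment_bound_nonneg[OF assms] by (simp add: add_nonneg_pos)
  assume "1 \<le> i" and "i \<le> lam b r"
  then obtain m M where "b ^ M dvd rtrunc b r (i - 1)"
    and "b ^ m dvd rtrunc b r i - rtrunc b r (i - 1)" and "rtrunc b r i - rtrunc b r (i - 1) < b ^ M"
    and "M = Suc m \<or> rtrunc b r i - rtrunc b r (i - 1) + b ^ m = b ^ M"
    by (rule rtrunc_increment[OF assms])
  have "(\<integral>\<^sup>+ x. ennreal (\<bar>Xr b r i x\<bar> ^ k) \<partial>haar b)
      = (\<integral>\<^sup>+ x. ennreal (\<bar>Delta b (rtrunc b r i - rtrunc b r (i - 1)) (badd b x (rtrunc b r (i - 1)))\<bar> ^ k) \<partial>haar b)"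
    using AE_haar_digits[OF assms] by (intro nn_integral_cong_AE) (auto simp: Xr_eq_Delta[OF assms])
  also have "\<dots> \<le> ennreal (moment_bound b k)"
    by (rule nn_integral_Delta_block) fact+
  also have "\<dots> \<le> ennreal (moment_bound b k + 1)"
    by (intro ennreal_leI) simp
  finally show "(\<integral>\<^sup>+ x. ennreal (\<bar>Xr b r i x\<bar> ^ k) \<partial>haar b) \<le> ennreal (moment_bound b k + 1)" .
qed

end
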